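(* Let $A$ be an infinite set, $\mathcal{L}\in V(\Omega(A))$, and $I,J,K$ sets. If $f:A^{I}\to A^{J}$ and $g:A^{J}\to A^{K}$ are uniformly continuous, then $\overline{g}^{\mathcal{L}}\circ\overline{f}^{\mathcal{L}}=\overline{g\circ f}^{\mathcal{L}}$ as maps $\mathcal{L}^{I}\to\mathcal{L}^{K}$.
   Context: For each $a\in A$ let $\hat{a}$ be a constant symbol, and for each $n\geq1$ and each $h:A^{n}\to A$ let $\hat{h}$ be an $n$-ary operation symbol. $\Omega(A)$ is the algebra with universe $A$ interpreting $\hat{a}$ as $a$ and $\hat{h}$ as $h$; $V(\Omega(A))$ is the variety it generates. Partitions: for $h:X\to Y$, $\Pi(h)$ is the partition of $X$ into nonempty fibers, and for a partition $P$ of $Y$, $[h]_{-1}(P)=\{h^{-1}(R):R\in P\}\setminus\{\emptyset\}$. For $i_{1},\dots,i_{n}\in I$, $\mathcal{P}_{i_{1},\dots,i_{n}}$ is the partition of $A^{I}$ with $u,v$ in the same block iff $u(i_{k})=v(i_{k})$ for all $k$; $\mathcal{P}(A,I)$ is the filter of partitions of $A^{I}$ coarser than some $\mathcal{P}_{i_{1},\dots,i_{n}}$. $\mathbf{F}(A,I)=\{h\in A^{A^{I}}:\Pi(h)\in\mathcal{P}(A,I)\}$, a subalgebra of $\Omega(A)^{A^{I}}$, freely generated in $V(\Omega(A))$ by the projections $\pi_{i}(u)=u(i)$; every $h\in\mathbf{F}(A,I)$ can be written $h=\hat{r}^{\mathbf{F}(A,I)}(\pi_{i_{1}},\dots,\pi_{i_{n}})$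 for some $r:A^{n}\to A$ and $i_{1},\dots,i_{n}\in I$. Uniform continuity: $h:X\to Y$ with $X,Y$ carrying filters of partitions $F,G$ is uniformly continuous if $[h]_{-1}(P)\in F$ for all $P\in G$; $A^{I}$ carries $\mathcal{P}(A,I)$ and $A$ carries all partitions of $A$ (so uniformly continuous maps $A^{I}\to A$ are exactly the elements of $\mathbf{F}(A,I)$). For $h=\hat{r}^{\mathbf{F}(A,I)}(\pi_{i_{1}},\dots,\pi_{i_{n}})\in\mathbf{F}(A,I)$, define $\overline{h}^{\mathcal{L}}:\mathcal{L}^{I}\to\mathcal{L}$ by $\overline{h}^{\mathcal{L}}((\ell_{i})_{i\in I})=\hat{r}^{\mathcal{L}}(\ell_{i_{1}},\dots,\ell_{i_{n}})$ (this is well defined). For uniformly continuous $f:A^{I}\to A^{J}$, define $\overline{f}^{\mathcal{L}}:\mathcal{L}^{I}\to\mathcal{L}^{J}$ by $\overline{f}^{\mathcal{L}}(\alpha)=(\overline{\pi_{j}\circ f}^{\mathcal{L}}(\alpha))_{j\in J}$. *)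

theory Defs
  imports "HOL-Library.Disjoint_Sets" "HOL-Library.FuncSet"
begin

text \<open>The base set A is the universe of the type 'a.  An operation symbol of Omega(A) is
  encoded by a function h :: 'a list => 'a together with an arity n (the length of the
  argument list it is applied to): it denotes the operation h restricted to lists of
  length n, i.e. a map A^n -> A.  Arity 0 gives the constant symbols (the constant for
  a is represented by any h with h [] = a).  An Omega(A)-algebra with universe the type
  'l is given by its interpretation ops :: ('a list => 'a) => 'l list => 'l, where
  ops h xs interprets the symbol (length xs, h) applied to xs.\<close>

datatype 'a trm = Var nat | Op "'a list \<Rightarrow> 'a" "'a trm list"

fun eval :: "(('a list \<Rightarrow> 'a) \<Rightarrow> 'l list \<Rightarrow> 'l) \<Rightarrow> (nat \<Rightarrow> 'l) \<Rightarrow> 'a trm \<Rightarrow> 'l" where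
  "eval ops \<rho> (Var n) = \<rho> n"
| "eval ops \<rho> (Op h ts) = ops h (map (eval ops \<rho>) ts)"

definition Omega_ops :: "('a list \<Rightarrow> 'a) \<Rightarrow> 'a list \<Rightarrow> 'a" where
  "Omega_ops h xs = h xs"

text \<open>V(Omega(A)): the variety generated by Omega(A), i.e. the class of algebras
  satisfying every identity that holds in Omega(A).\<close>
definition in_variety :: "(('a list \<Rightarrow> 'a) \<Rightarrow> 'l list \<Rightarrow> 'l) \<Rightarrow> bool" where
  "in_variety ops \<longleftrightarrow>
     (\<forall>s t. (\<forall>\<rho>::nat \<Rightarrow> 'a. eval Omega_ops \<rho> s = eval Omega_ops \<rho> t)
        \<longrightarrow> (\<forall>\<rho>::nat \<Rightarrow> 'l. eval ops \<rho> s = eval ops \<rho> t))"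

definition cube :: "'i set \<Rightarrow> ('i \<Rightarrow> 'a) set" where
  "cube I = PiE I (\<lambda>_. UNIV)"

definition agree_part :: "'i set \<Rightarrow> 'i set \<Rightarrow> ('i \<Rightarrow> 'a) set set" where
  "agree_part I S = {{v \<in> cube I. \<forall>i\<in>S. v i = u i} | u. u \<in> cube I}"

definition coarser :: "'b set set \<Rightarrow> 'b set set \<Rightarrow> bool" where
  "coarser Q P \<longleftrightarrow> (\<forall>B\<in>P. \<exists>C\<in>Q. B \<subseteq> C)"

definition PAI :: "'i set \<Rightarrow> ('i \<Rightarrow> 'a) set set set" where
  "PAI I = {Q. partition_on (cube I) Q \<and>
     (\<exists>S. finite S \<and> S \<subseteq> I \<and> coarser Q (agree_part I S))}"

definition preimage_part :: "'b set \<Rightarrow> ('b \<Rightarrow> 'c) \<Rightarrow> 'c set set \<Rightarrow> 'b set set" where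
  "preimage_part X h P = {h -` R \<inter> X | R. R \<in> P} - {{}}"

definition unif_cont :: "'i set \<Rightarrow> 'j set \<Rightarrow> (('i \<Rightarrow> 'a) \<Rightarrow> ('j \<Rightarrow> 'a)) \<Rightarrow> bool" where
  "unif_cont I J f \<longleftrightarrow> f \<in> cube I \<rightarrow> cube J \<and>
     (\<forall>P \<in> PAI J. preimage_part (cube I) f P \<in> PAI I)"

text \<open>For h in F(A,I), h = r^(pi_{i_1},...,pi_{i_n}); then
  bar h (l_i) = r^L(l_{i_1},...,l_{i_n}).  The representation (r, [i_1..i_n]) is chosen by
  Hilbert choice (the value does not depend on the choice for L in the variety).\<close>
definition bar_fun :: "(('a list \<Rightarrow> 'a) \<Rightarrow> 'l list \<Rightarrow> 'l) \<Rightarrow> 'i set \<Rightarrow> (('i \<Rightarrow> 'a) \<Rightarrow> 'a)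
    \<Rightarrow> ('i \<Rightarrow> 'l) \<Rightarrow> 'l" where
  "bar_fun ops I h lv =
     (let (r, ks) = (SOME (r, ks). set ks \<subseteq> I \<and> (\<forall>u\<in>cube I. h u = r (map u ks)))
      in ops r (map lv ks))"

definition bar_map :: "(('a list \<Rightarrow> 'a) \<Rightarrow> 'l list \<Rightarrow> 'l) \<Rightarrow> 'i set \<Rightarrow> 'j set
    \<Rightarrow> (('i \<Rightarrow> 'a) \<Rightarrow> ('j \<Rightarrow> 'a)) \<Rightarrow> ('i \<Rightarrow> 'l) \<Rightarrow> ('j \<Rightarrow> 'l)" where
  "bar_map ops I J f \<alpha> = restrict (\<lambda>j. bar_fun ops I (\<lambda>u. f u j) \<alpha>) J"

end

theory Submission
  imports Defs
begin

text \<open>Every coordinate of a uniformly continuous map depends on finitely many coordinates only,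
  so it is a basic operation of Omega(A) applied to finitely many projections.  Composing such
  representations gives a representation of the coordinates of g \<circ> f by a depth-two term.  Two
  terms that represent the same function on A^I are, after renaming their variables, an identity
  of Omega(A); hence they also agree in every algebra of the variety, which makes the
  extensions well defined and compatible with composition.\<close>

definition represents :: "'i set \<Rightarrow> (('i \<Rightarrow> 'a) \<Rightarrow> 'a) \<Rightarrow> ('a list \<Rightarrow> 'a) \<Rightarrow> 'i list \<Rightarrow> bool" where
  "represents I h r ks \<longleftrightarrow> set ks \<subseteq> I \<and> (\<forall>u\<in>cube I. h u = r (map u ks))"

definition determined_by :: "'i set \<Rightarrow> 'i set \<Rightarrow> (('i \<Rightarrow> 'a) \<Rightarrow> 'b) \<Rightarrow> bool" where
  "determined_by I S h \<longleftrightarrow> (\<forall>u\<in>cube I. \<forall>v\<in>cube I. (\<forall>i\<in>S. u i = v i) \<longrightarrow> h u = h v)"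

fun tvars :: "'a trm \<Rightarrow> nat set" where
  "tvars (Var n) = {n}"
| "tvars (Op h ts) = \<Union>(tvars ` set ts)"

lemma eval_cong: "(\<And>n. n \<in> tvars t \<Longrightarrow> \<rho> n = \<rho>' n) \<Longrightarrow> eval ops \<rho> t = eval ops \<rho>' t"
  by (induction t) (auto intro!: arg_cong[where f = "ops _"] map_cong)

text \<open>Variables are numbered by an injection e of a finite S \<subseteq> I into nat, so a point u of A^I
  yields the valuation u \<circ> inv_into S e.  Every valuation on e ` S arises in this way, which is
  why an equation holding on all of A^I is an identity of Omega(A).\<close>

lemma identity_transfer:
  assumes var: "in_variety ops" and inj: "inj_on e S" and SI: "S \<subseteq> I"
    and vars: "tvars s \<subseteq> e ` S" "tvars t \<subseteq> e ` S"
    and eq: "\<forall>u\<in>cube I. eval Omega_ops (u \<circ> inv_into S e) s = eval Omega_ops (u \<circ> inv_into S e) t"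
  shows "eval ops (lv \<circ> inv_into S e) s = eval ops (lv \<circ> inv_into S e) t"
proof -
  have "eval Omega_ops \<rho> s = eval Omega_ops \<rho> t" for \<rho> :: "nat \<Rightarrow> 'a"
  proof -
    define u where "u i = (if i \<in> I then \<rho> (e i) else undefined)" for i
    have u: "u \<in> cube I" by (auto simp: cube_def u_def)
    have agree: "(u \<circ> inv_into S e) n = \<rho> n" if "n \<in> e ` S" for n
      using that inj SI by (auto simp: u_def inv_into_f_f)
    have "eval Omega_ops \<rho> s = eval Omega_ops (u \<circ> inv_into S e) s"
      using agree vars by (intro eval_cong) auto
    also have "\<dots> = eval Omega_ops (u \<circ> inv_into S e) t" using eq u by blast
    also have "\<dots> = eval Omega_ops \<rho> t"
      using agree vars by (intro eval_cong) auto
    finally show ?thesis .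
  qed
  with var show ?thesis unfolding in_variety_def by blast
qed

definition op_trm :: "('i \<Rightarrow> nat) \<Rightarrow> ('a list \<Rightarrow> 'a) \<Rightarrow> 'i list \<Rightarrow> 'a trm" where
  "op_trm e r ks = Op r (map (Var \<circ> e) ks)"

lemma tvars_op_trm: "tvars (op_trm e r ks) = e ` set ks"
  by (auto simp: op_trm_def)

lemma eval_op_trm:
  assumes "inj_on e S" "set ks \<subseteq> S"
  shows "eval X (w \<circ> inv_into S e) (op_trm e r ks) = X r (map w ks)"
  using assms by (auto simp: op_trm_def inv_into_f_f subset_iff intro!: arg_cong[where f = "X r"])

lemma finite_inj_to_nat: "finite S \<Longrightarrow> \<exists>e :: 'x \<Rightarrow> nat. inj_on e S"
  using finite_imp_inj_to_nat_seg by blast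

lemma determined_by_represents:
  fixes h :: "('i \<Rightarrow> 'a) \<Rightarrow> 'a"
  assumes S: "finite S" "S \<subseteq> I" and det: "determined_by I S h"
  shows "\<exists>r ks. represents I h r ks"
proof -
  obtain ks where ks: "set ks = S" using finite_list[OF S(1)] by blast
  define point :: "'a list \<Rightarrow> 'i \<Rightarrow> 'a" where
    "point xs i = (if i \<in> I then (case map_of (zip ks xs) i of Some a \<Rightarrow> a | None \<Rightarrow> undefined)
                   else undefined)" for xs i
  have point: "h u = h (point (map u ks))" if u: "u \<in> cube I" for u
  proof -
    have "point (map u ks) \<in> cube I" by (simp add: cube_def PiE_def extensional_def point_def)
    moreover have "\<forall>i\<in>S. u i = point (map u ks) i"
      using ks S(2) by (auto simp: point_def map_of_zip_map)
    ultimately show ?thesis using det u unfolding determined_by_def by blast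
  qed
  have "represents I h (h \<circ> point) ks"
    unfolding represents_def comp_def using ks S(2) point by blast
  then show ?thesis by blast
qed

text \<open>The fibres of the j-th projection form a partition in P(A,J); uniform continuity pulls it
  back to a partition coarser than some P_S, i.e. the j-th coordinate of f depends only on S.\<close>

lemma unif_cont_coordinate_determined:
  fixes f :: "('i \<Rightarrow> 'a) \<Rightarrow> ('j \<Rightarrow> 'a)"
  assumes uc: "unif_cont I J f" and j: "j \<in> J"
  shows "\<exists>S. finite S \<and> S \<subseteq> I \<and> determined_by I S (\<lambda>u. f u j)"
proof -
  define P :: "('j \<Rightarrow> 'a) set set" where "P = {{v \<in> cube J. v j = a} | a. True} - {{}}"
  have "partition_on (cube J) P"
    unfolding partition_on_def disjoint_def P_def by auto
  moreover have "coarser P (agree_part J {j})"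
    unfolding coarser_def agree_part_def
  proof clarify
    fix u :: "'j \<Rightarrow> 'a" assume "u \<in> cube J"
    then have "{v \<in> cube J. \<forall>i\<in>{j}. v i = u i} \<subseteq> {v \<in> cube J. v j = u j}"
      "{v \<in> cube J. v j = u j} \<in> P"
      by (auto simp: P_def)
    then show "\<exists>C\<in>P. {v \<in> cube J. \<forall>i\<in>{j}. v i = u i} \<subseteq> C" by blast
  qed
  ultimately have "P \<in> PAI J" using j unfolding PAI_def by blast
  then have "preimage_part (cube I) f P \<in> PAI I" using uc unfolding unif_cont_def by blast
  then obtain S where S: "finite S" "S \<subseteq> I" and coarse: "coarser (preimage_part (cube I) f P) (agree_part I S)"
    unfolding PAI_def by blast
  have "f u j = f v j" if u: "u \<in> cube I" and v: "v \<in> cube I" and agree: "\<forall>i\<in>S. u i = v i" for u v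
  proof -
    have "{w \<in> cube I. \<forall>i\<in>S. w i = u i} \<in> agree_part I S" unfolding agree_part_def using u by blast
    then obtain C where C: "C \<in> preimage_part (cube I) f P" "{w \<in> cube I. \<forall>i\<in>S. w i = u i} \<subseteq> C"
      using coarse unfolding coarser_def by blast
    then obtain a where "C = f -` {w \<in> cube J. w j = a} \<inter> cube I"
      unfolding preimage_part_def P_def by blast
    moreover have "u \<in> C" "v \<in> C" using C(2) u v agree by auto
    ultimately show ?thesis by auto
  qed
  with S show ?thesis unfolding determined_by_def by blast
qed

lemma unif_cont_coordinate_represents:
  "unif_cont I J f \<Longrightarrow> j \<in> J \<Longrightarrow> \<exists>r ks. represents I (\<lambda>u. f u j) r ks"
  using unif_cont_coordinate_determined determined_by_represents by metis

lemma represents_same_value: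
  assumes var: "in_variety ops" and h: "represents I h r ks" and h': "represents I h r' ks'"
  shows "ops r (map lv ks) = ops r' (map lv ks')"
proof -
  define S where "S = set ks \<union> set ks'"
  obtain e :: "_ \<Rightarrow> nat" where inj: "inj_on e S" using finite_inj_to_nat[of S] S_def by auto
  have sub: "set ks \<subseteq> S" "set ks' \<subseteq> S" and SI: "S \<subseteq> I"
    using h h' by (auto simp: S_def represents_def)
  have "eval ops (lv \<circ> inv_into S e) (op_trm e r ks) = eval ops (lv \<circ> inv_into S e) (op_trm e r' ks')"
    by (rule identity_transfer[OF var inj SI])
       (use sub h h' in \<open>auto simp: tvars_op_trm eval_op_trm[OF inj] Omega_ops_def represents_def\<close>)
  then show ?thesis by (simp add: eval_op_trm[OF inj sub(1)] eval_op_trm[OF inj sub(2)])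
qed

lemma bar_fun_eq:
  assumes "in_variety ops" and "represents I h r ks"
  shows "bar_fun ops I h lv = ops r (map lv ks)"
proof -
  let ?P = "\<lambda>(r, ks). represents I h r ks"
  obtain r0 ks0 where choice: "(SOME x. ?P x) = (r0, ks0)" by fastforce
  have "represents I h r0 ks0" using someI[of ?P "(r, ks)"] assms(2) choice by simp
  then have "bar_fun ops I h lv = ops r0 (map lv ks0)"
    using choice by (simp add: bar_fun_def represents_def[abs_def])
  also have "\<dots> = ops r (map lv ks)" using represents_same_value assms \<open>represents I h r0 ks0\<close> by metis
  finally show ?thesis .
qed

lemma bar_fun_comp_represents:
  fixes f :: "('i \<Rightarrow> 'a) \<Rightarrow> ('j \<Rightarrow> 'a)"
  assumes var: "in_variety ops" and f: "f \<in> cube I \<rightarrow> cube J" and h: "represents J h s js"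
    and fj: "\<forall>j\<in>set js. represents I (\<lambda>u. f u j) (R j) (KS j)"
  shows "bar_fun ops I (h \<circ> f) \<alpha> = ops s (map (\<lambda>j. ops (R j) (map \<alpha> (KS j))) js)"
proof -
  define S0 where "S0 = (\<Union>j\<in>set js. set (KS j))"
  have S0: "finite S0" "S0 \<subseteq> I" using fj by (auto simp: S0_def represents_def)
  have hf: "(h \<circ> f) u = s (map (\<lambda>j. R j (map u (KS j))) js)" if u: "u \<in> cube I" for u
  proof -
    have "(h \<circ> f) u = s (map (f u) js)" using f h u by (auto simp: represents_def)
    also have "map (f u) js = map (\<lambda>j. R j (map u (KS j))) js" using fj u by (simp add: represents_def)
    finally show ?thesis .
  qed
  have "determined_by I S0 (h \<circ> f)"
    unfolding determined_by_def S0_def using hf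
    by (auto intro!: arg_cong[where f = s] arg_cong[where f = "R _"] map_cong)
  then obtain t ks where t: "represents I (h \<circ> f) t ks"
    using determined_by_represents[OF S0] by blast
  define S where "S = set ks \<union> S0"
  obtain e :: "'i \<Rightarrow> nat" where inj: "inj_on e S" using finite_inj_to_nat[of S] S0 by (auto simp: S_def)
  have SI: "S \<subseteq> I" and ks: "set ks \<subseteq> S" and KS: "\<And>j. j \<in> set js \<Longrightarrow> set (KS j) \<subseteq> S"
    using t S0 by (auto simp: S_def S0_def represents_def)
  let ?comp = "Op s (map (\<lambda>j. op_trm e (R j) (KS j)) js)"
  have eval_comp: "eval X (w \<circ> inv_into S e) ?comp = X s (map (\<lambda>j. X (R j) (map w (KS j))) js)" for X w
    using KS by (auto simp: eval_op_trm[OF inj] intro!: arg_cong[where f = "X s"] map_cong)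
  have "\<forall>u\<in>cube I. eval Omega_ops (u \<circ> inv_into S e) ?comp
                    = eval Omega_ops (u \<circ> inv_into S e) (op_trm e t ks)"
    unfolding eval_comp eval_op_trm[OF inj ks] Omega_ops_def using hf t by (simp add: represents_def)
  then have "eval ops (\<alpha> \<circ> inv_into S e) ?comp = eval ops (\<alpha> \<circ> inv_into S e) (op_trm e t ks)"
    by (intro identity_transfer[OF var inj SI]) (use KS ks in \<open>auto simp: tvars_op_trm\<close>)
  then show ?thesis unfolding eval_comp eval_op_trm[OF inj ks] bar_fun_eq[OF var t] by simp
qed

lemma bar_fun_bar_map:
  fixes f :: "('i \<Rightarrow> 'a) \<Rightarrow> ('j \<Rightarrow> 'a)"
  assumes var: "in_variety ops" and uc: "unif_cont I J f" and h: "represents J h s js"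
  shows "bar_fun ops J h (bar_map ops I J f \<alpha>) = bar_fun ops I (h \<circ> f) \<alpha>"
proof -
  have js: "set js \<subseteq> J" using h by (simp add: represents_def)
  obtain R KS where fj: "\<forall>j\<in>set js. represents I (\<lambda>u. f u j) (R j) (KS j)"
    using bchoice[of "set js" "\<lambda>j (r, ks). represents I (\<lambda>u. f u j) r ks"]
      unif_cont_coordinate_represents[OF uc] js by (fastforce simp: split_beta subset_iff)
  have "bar_fun ops J h (bar_map ops I J f \<alpha>) = ops s (map (bar_map ops I J f \<alpha>) js)"
    by (rule bar_fun_eq[OF var h])
  also have "\<dots> = ops s (map (\<lambda>j. ops (R j) (map \<alpha> (KS j))) js)"
  proof -
    have "bar_map ops I J f \<alpha> j = ops (R j) (map \<alpha> (KS j))" if "j \<in> set js" for j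
    proof -
      have "represents I (\<lambda>u. f u j) (R j) (KS j)" using fj that by blast
      with that js show ?thesis by (auto simp: bar_map_def bar_fun_eq[OF var])
    qed
    then show ?thesis by (intro arg_cong[where f = "ops s"] map_cong) auto
  qed
  also have "\<dots> = bar_fun ops I (h \<circ> f) \<alpha>"
    using bar_fun_comp_represents[OF var _ h fj] uc by (simp add: unif_cont_def)
  finally show ?thesis .
qed

theorem mainTheorem6:
  fixes ops :: "('a list \<Rightarrow> 'a) \<Rightarrow> 'l list \<Rightarrow> 'l"
    and I :: "'i set" and J :: "'j set" and K :: "'k set"
    and f :: "('i \<Rightarrow> 'a) \<Rightarrow> ('j \<Rightarrow> 'a)" and g :: "('j \<Rightarrow> 'a) \<Rightarrow> ('k \<Rightarrow> 'a)"
  assumes "infinite (UNIV :: 'a set)"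
    and "in_variety ops"
    and "unif_cont I J f"
    and "unif_cont J K g"
  shows "\<forall>\<alpha> \<in> PiE I (\<lambda>_. UNIV :: 'l set).
           bar_map ops J K g (bar_map ops I J f \<alpha>) = bar_map ops I K (g \<circ> f) \<alpha>"
proof (intro ballI ext)
  fix \<alpha> :: "'i \<Rightarrow> 'l" and k :: 'k
  show "bar_map ops J K g (bar_map ops I J f \<alpha>) k = bar_map ops I K (g \<circ> f) \<alpha> k"
  proof (cases "k \<in> K")
    case True
    then obtain s js where "represents J (\<lambda>v. g v k) s js"
      using unif_cont_coordinate_represents[OF assms(4)] by blast
    from bar_fun_bar_map[OF assms(2,3) this] True show ?thesis
      by (simp add: bar_map_def comp_def)
  qed (simp add: bar_map_def)
qed

end
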